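(* Under the setting and assumptions in the context, let $\ell\neq z$ be two cluster indices with cluster natural frequencies $\omega_\ell,\omega_z$. Suppose $$|\omega_\ell-\omega_z|>2(m-2)\max_{k\neq\ell,z}\Big\{\sum_{r\in\mathcal P_k}a_{ir},\ \sum_{r\in\mathcal P_k}a_{jr}\Big\}$$ for some (equivalently, by (A3), any) $i\in\mathcal P_\ell$, $j\in\mathcal P_z$. Then there is no solution $\theta(\cdot)$ with $\theta(t)\in\mathcal S_{\mathcal P}$ for all $t\ge0$ along which the phases of clusters $\mathcal P_\ell$ and $\mathcal P_z$ coincide for all $t\ge0$. Consequently, if this inequality holds for every pair of clusters, no submanifold of $\mathcal S_{\mathcal P}$ on which two distinct clusters share the same phase is invariant.
   Context: **Graph and dynamics.** Let $\mathcal G=(\mathcal V,\mathcal E)$ be a connected, undirected, weighted graph with $\mathcal V=\{1,\dots,n\}$ and no self-loops. Its adjacency matrix $A=[a_{ij}]$ is symmetric, with $a_{ij}>0$ if $(i,j)\in\mathcal E$ and $0$ otherwise. The Kuramoto dynamics are $$\dot\theta_i=\omega_i+\sum_{j\neq i}a_{ij}\sin(\theta_j-\theta_i),$$ with $\theta_i\in\mathbb S^1$ and $\omega_i>0$. **Partition and manifold.** Let $\mathcal P=\{\mathcal P_1,\dots,\mathcal P_m\}$, $m>1$, be a partition of $\mathcal V$. The cluster synchronization manifold is $$\mathcal S_{\mathcal P}=\{\theta\in\mathbb T^n:\theta_i=\theta_j\ \text{for all } i,j\in\mathcal P_k,\ k=1,\dots,m\}.$$ **Standing assumptions.** - (A2)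 $\omega_i=\omega_j$ whenever $i,j$ lie in the same cluster; $\omega_k$ denotes the common value on $\mathcal P_k$. - (A3) $\sum_{k\in\mathcal P_\ell}(a_{ik}-a_{jk})=0$ for all $i,j\in\mathcal P_z$ and all $z\neq\ell$. *)

theory Defs
  imports "HOL-Analysis.Analysis"
begin

text \<open>Phases on the circle are represented by real lifts;
  equality on the circle S^1 is equality modulo 2 pi.\<close>

definition circ_eq :: "real \<Rightarrow> real \<Rightarrow> bool" where
  "circ_eq x y \<longleftrightarrow> (\<exists>k::int. x - y = 2 * pi * of_int k)"

definition weighted_graph :: "nat \<Rightarrow> (nat \<Rightarrow> nat \<Rightarrow> real) \<Rightarrow> bool" where
  "weighted_graph n a \<longleftrightarrow>
     (\<forall>i\<in>{1..n}. \<forall>j\<in>{1..n}. a i j = a j i \<and> a i j \<ge> 0) \<and>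
     (\<forall>i\<in>{1..n}. a i i = 0)"

definition graph_connected :: "nat \<Rightarrow> (nat \<Rightarrow> nat \<Rightarrow> real) \<Rightarrow> bool" where
  "graph_connected n a \<longleftrightarrow>
     (\<forall>i\<in>{1..n}. \<forall>j\<in>{1..n}.
        (\<lambda>x y. x \<in> {1..n} \<and> y \<in> {1..n} \<and> a x y > 0)\<^sup>*\<^sup>* i j)"

definition is_partition :: "nat \<Rightarrow> nat \<Rightarrow> (nat \<Rightarrow> nat set) \<Rightarrow> bool" where
  "is_partition n m P \<longleftrightarrow>
     (\<forall>k\<in>{1..m}. P k \<noteq> {} \<and> P k \<subseteq> {1..n}) \<and>
     (\<forall>k\<in>{1..m}. \<forall>k'\<in>{1..m}. k \<noteq> k' \<longrightarrow> P k \<inter> P k' = {}) \<and>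
     (\<Union>k\<in>{1..m}. P k) = {1..n}"

definition assm_A2 :: "nat \<Rightarrow> (nat \<Rightarrow> nat set) \<Rightarrow> (nat \<Rightarrow> real) \<Rightarrow> bool" where
  "assm_A2 m P \<omega> \<longleftrightarrow> (\<forall>k\<in>{1..m}. \<forall>i\<in>P k. \<forall>j\<in>P k. \<omega> i = \<omega> j)"

definition assm_A3 :: "nat \<Rightarrow> (nat \<Rightarrow> nat set) \<Rightarrow> (nat \<Rightarrow> nat \<Rightarrow> real) \<Rightarrow> bool" where
  "assm_A3 m P a \<longleftrightarrow>
     (\<forall>z\<in>{1..m}. \<forall>l\<in>{1..m}. z \<noteq> l \<longrightarrow>
        (\<forall>i\<in>P z. \<forall>j\<in>P z. (\<Sum>k\<in>P l. a i k - a j k) = 0))"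

definition in_SP :: "nat \<Rightarrow> (nat \<Rightarrow> nat set) \<Rightarrow> (nat \<Rightarrow> real) \<Rightarrow> bool" where
  "in_SP m P th \<longleftrightarrow> (\<forall>k\<in>{1..m}. \<forall>i\<in>P k. \<forall>j\<in>P k. circ_eq (th i) (th j))"

definition clusters_coincide :: "(nat \<Rightarrow> nat set) \<Rightarrow> nat \<Rightarrow> nat \<Rightarrow> (nat \<Rightarrow> real) \<Rightarrow> bool" where
  "clusters_coincide P l z th \<longleftrightarrow> (\<forall>i\<in>P l. \<forall>j\<in>P z. circ_eq (th i) (th j))"

definition kuramoto_solution ::
  "nat \<Rightarrow> (nat \<Rightarrow> nat \<Rightarrow> real) \<Rightarrow> (nat \<Rightarrow> real) \<Rightarrow> (real \<Rightarrow> nat \<Rightarrow> real) \<Rightarrow> bool" where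
  "kuramoto_solution n a \<omega> \<theta> \<longleftrightarrow>
     (\<forall>i\<in>{1..n}. \<forall>t\<ge>0.
        ((\<lambda>s. \<theta> s i) has_real_derivative
           (\<omega> i + (\<Sum>j\<in>{1..n} - {i}. a i j * sin (\<theta> t j - \<theta> t i)))) (at t within {0..}))"

definition gap_condition ::
  "nat \<Rightarrow> (nat \<Rightarrow> nat set) \<Rightarrow> (nat \<Rightarrow> nat \<Rightarrow> real) \<Rightarrow> (nat \<Rightarrow> real) \<Rightarrow> nat \<Rightarrow> nat \<Rightarrow> bool" where
  "gap_condition m P a \<omega> l z \<longleftrightarrow>
     (\<exists>i\<in>P l. \<exists>j\<in>P z.
        \<bar>\<omega> i - \<omega> j\<bar> > 2 * (real m - 2) *
          Max ((\<lambda>k. \<Sum>r\<in>P k. a i r) ` ({1..m} - {l, z}) \<union>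
               (\<lambda>k. \<Sum>r\<in>P k. a j r) ` ({1..m} - {l, z})))"

definition kuramoto_invariant ::
  "nat \<Rightarrow> (nat \<Rightarrow> nat \<Rightarrow> real) \<Rightarrow> (nat \<Rightarrow> real) \<Rightarrow> (nat \<Rightarrow> real) set \<Rightarrow> bool" where
  "kuramoto_invariant n a \<omega> M \<longleftrightarrow>
     (\<forall>th0\<in>M. \<exists>\<theta>. kuramoto_solution n a \<omega> \<theta> \<and> \<theta> 0 = th0 \<and> (\<forall>t\<ge>0. \<theta> t \<in> M))"

end

theory Submission
  imports Defs
begin

text \<open>If clusters \<open>\<P>\<^sub>\<ell>\<close> and \<open>\<P>\<^sub>z\<close> stay phase-locked, the difference \<open>\<theta>\<^sub>i - \<theta>\<^sub>j\<close> of
  representatives \<open>i \<in> \<P>\<^sub>\<ell>\<close>, \<open>j \<in> \<P>\<^sub>z\<close> is a continuous function with values in \<open>2\<pi>\<int>\<close>,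
  hence constant, so the right-hand sides of the Kuramoto equations at \<open>i\<close> and \<open>j\<close>
  agree. In these right-hand sides every neighbour in \<open>\<P>\<^sub>\<ell>\<close> or \<open>\<P>\<^sub>z\<close> has the same
  phase as \<open>i\<close> and \<open>j\<close> and contributes nothing, while each of the remaining \<open>m - 2\<close>
  clusters contributes at most its total weight. Hence \<open>|\<omega>\<^sub>\<ell> - \<omega>\<^sub>z|\<close> is at most
  \<open>2(m - 2)\<close> times the largest such weight, contradicting the gap condition.\<close>

definition kuramoto_field ::
  "nat \<Rightarrow> (nat \<Rightarrow> nat \<Rightarrow> real) \<Rightarrow> (nat \<Rightarrow> real) \<Rightarrow> (nat \<Rightarrow> real) \<Rightarrow> nat \<Rightarrow> real" where
  "kuramoto_field n a \<omega> x i = \<omega> i + (\<Sum>j\<in>{1..n} - {i}. a i j * sin (x j - x i))"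

lemma kuramoto_solution_iff_field:
  "kuramoto_solution n a \<omega> \<theta> \<longleftrightarrow>
     (\<forall>i\<in>{1..n}. \<forall>t\<ge>0.
        ((\<lambda>s. \<theta> s i) has_real_derivative kuramoto_field n a \<omega> (\<theta> t) i) (at t within {0..}))"
  unfolding kuramoto_solution_def kuramoto_field_def ..

lemma kuramoto_field_eq_full_sum:
  assumes "i \<in> {1..n}"
  shows "kuramoto_field n a \<omega> x i = \<omega> i + (\<Sum>k\<in>{1..n}. a i k * sin (x k - x i))"
  using assms by (simp add: kuramoto_field_def sum.remove)

lemma circ_eq_sym: "circ_eq x y \<Longrightarrow> circ_eq y x"
  unfolding circ_eq_def by (metis minus_diff_eq mult_minus_right of_int_minus)

lemma circ_eq_sin_diff: "circ_eq x y \<Longrightarrow> sin (x - y) = 0"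
  unfolding circ_eq_def by auto

lemma continuous_on_2pi_multiples_imp_constant_on:
  fixes f :: "'a::topological_space \<Rightarrow> real"
  assumes "connected S" "continuous_on S f"
    and mult: "\<And>t. t \<in> S \<Longrightarrow> \<exists>k::int. f t = 2 * pi * of_int k"
  shows "f constant_on S"
proof (rule continuous_discrete_range_constant[OF assms(1,2)])
  fix x assume x: "x \<in> S"
  show "\<exists>e>0. \<forall>y. y \<in> S \<and> f y \<noteq> f x \<longrightarrow> e \<le> norm (f y - f x)"
  proof (intro exI[of _ "2 * pi"] conjI allI impI)
    fix y assume y: "y \<in> S \<and> f y \<noteq> f x"
    obtain kx ky :: int where kx: "f x = 2 * pi * of_int kx" and ky: "f y = 2 * pi * of_int ky"
      using mult x y by blast
    have "1 \<le> \<bar>of_int (ky - kx) :: real\<bar>"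
      using y kx ky by auto
    then have "2 * pi * 1 \<le> 2 * pi * \<bar>of_int (ky - kx) :: real\<bar>"
      by (intro mult_left_mono) auto
    also have "\<dots> = norm (f y - f x)"
      using kx ky by (simp add: abs_mult right_diff_distrib[symmetric])
    finally show "2 * pi \<le> norm (f y - f x)" by simp
  qed simp
qed

lemma kuramoto_locked_pair_field_eq:
  assumes sol: "kuramoto_solution n a \<omega> \<theta>"
    and ij: "i \<in> {1..n}" "j \<in> {1..n}"
    and locked: "\<forall>t\<ge>0. circ_eq (\<theta> t i) (\<theta> t j)"
    and t: "t > 0"
  shows "kuramoto_field n a \<omega> (\<theta> t) i = kuramoto_field n a \<omega> (\<theta> t) j"
proof -
  define f where "f = (\<lambda>s. \<theta> s i - \<theta> s j)"
  define F where "F = (\<lambda>s. kuramoto_field n a \<omega> (\<theta> s) i - kuramoto_field n a \<omega> (\<theta> s) j)"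
  have der: "(f has_real_derivative F s) (at s within {0..})" if "s \<ge> 0" for s
    using sol ij that unfolding kuramoto_solution_iff_field f_def F_def
    by (auto intro!: derivative_intros)
  have "f constant_on {0..}"
  proof (rule continuous_on_2pi_multiples_imp_constant_on)
    show "continuous_on {0..} f"
      by (rule DERIV_continuous_on) (use der in auto)
    show "\<exists>k::int. f s = 2 * pi * of_int k" if "s \<in> {0..}" for s
      using locked that unfolding f_def circ_eq_def by auto
  qed simp
  then obtain c where fc: "\<And>s. s \<in> {0..} \<Longrightarrow> f s = c"
    unfolding constant_on_def by blast
  have "(f has_real_derivative F t) (at t)"
    using der[of t] t at_within_interior[of t "{0..}"] by simp
  moreover have "(f has_real_derivative 0) (at t)"
    by (rule has_field_derivative_transform_within_open[of "\<lambda>_. c" _ _ "{0<..}"])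
       (use fc t in auto)
  ultimately have "F t = 0" by (rule DERIV_unique)
  then show ?thesis unfolding F_def by simp
qed

lemma sum_over_partition:
  assumes "is_partition n m P"
  shows "(\<Sum>k\<in>{1..n}. h k) = (\<Sum>c\<in>{1..m}. \<Sum>k\<in>P c. h k)"
proof -
  have "(\<Sum>k\<in>{1..n}. h k) = (\<Sum>k\<in>(\<Union>c\<in>{1..m}. P c). h k)"
    using assms unfolding is_partition_def by simp
  also have "\<dots> = (\<Sum>c\<in>{1..m}. \<Sum>k\<in>P c. h k)"
    using assms unfolding is_partition_def
    by (intro sum.UNION_disjoint) (auto intro: finite_subset)
  finally show ?thesis .
qed

lemma abs_weighted_sin_sum_le:
  fixes w y :: "'a \<Rightarrow> real"
  assumes "\<And>k. k \<in> K \<Longrightarrow> w k \<ge> 0"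
  shows "\<bar>\<Sum>k\<in>K. w k * sin (y k)\<bar> \<le> (\<Sum>k\<in>K. w k)"
proof -
  have "\<bar>\<Sum>k\<in>K. w k * sin (y k)\<bar> \<le> (\<Sum>k\<in>K. \<bar>w k * sin (y k)\<bar>)"
    by (rule sum_abs)
  also have "\<dots> \<le> (\<Sum>k\<in>K. w k)"
    using assms abs_sin_le_one by (intro sum_mono) (simp add: abs_mult mult_left_le)
  finally show ?thesis .
qed

lemma coupling_bound_outside_two_clusters:
  assumes graph: "weighted_graph n a" and part: "is_partition n m P"
    and lz: "l \<in> {1..m}" "z \<in> {1..m}" "l \<noteq> z"
    and i: "i \<in> {1..n}"
    and in_phase: "\<forall>k\<in>P l \<union> P z. circ_eq (x k) (x i)"
    and weight_le: "\<forall>c\<in>{1..m} - {l, z}. (\<Sum>k\<in>P c. a i k) \<le> B"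
  shows "\<bar>\<Sum>k\<in>{1..n}. a i k * sin (x k - x i)\<bar> \<le> (real m - 2) * B"
proof -
  let ?C = "{1..m} - {l, z}"
  let ?s = "\<lambda>c. \<Sum>k\<in>P c. a i k * sin (x k - x i)"
  have "?s c = 0" if "c = l \<or> c = z" for c
    using in_phase that by (auto intro!: sum.neutral circ_eq_sin_diff)
  then have "(\<Sum>k\<in>{1..n}. a i k * sin (x k - x i)) = (\<Sum>c\<in>?C. ?s c)"
    unfolding sum_over_partition[OF part] by (intro sum.mono_neutral_right) auto
  also have "\<bar>\<dots>\<bar> \<le> (\<Sum>c\<in>?C. \<bar>?s c\<bar>)"
    by (rule sum_abs)
  also have "\<dots> \<le> (\<Sum>c\<in>?C. B)"
  proof (rule sum_mono)
    fix c assume c: "c \<in> ?C"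
    have "\<And>k. k \<in> P c \<Longrightarrow> a i k \<ge> 0"
      using graph part i c unfolding weighted_graph_def is_partition_def by blast
    then have "\<bar>?s c\<bar> \<le> (\<Sum>k\<in>P c. a i k)"
      by (rule abs_weighted_sin_sum_le)
    moreover have "(\<Sum>k\<in>P c. a i k) \<le> B" using weight_le c by blast
    ultimately show "\<bar>?s c\<bar> \<le> B" by linarith
  qed
  also have "\<dots> = (real m - 2) * B"
    using lz by (simp add: card_Diff_subset of_nat_diff)
  finally show ?thesis .
qed

lemma no_solution_with_coinciding_clusters:
  assumes graph: "weighted_graph n a" and part: "is_partition n m P"
    and lz: "l \<in> {1..m}" "z \<in> {1..m}" "l \<noteq> z"
    and gap: "gap_condition m P a \<omega> l z"
    and sol: "kuramoto_solution n a \<omega> \<theta>"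
    and SP: "\<forall>t\<ge>0. in_SP m P (\<theta> t)"
    and coincide: "\<forall>t\<ge>0. clusters_coincide P l z (\<theta> t)"
  shows False
proof -
  let ?C = "{1..m} - {l, z}"
  obtain i j where i: "i \<in> P l" and j: "j \<in> P z"
    and gap_ij: "\<bar>\<omega> i - \<omega> j\<bar> > 2 * (real m - 2) *
       Max ((\<lambda>c. \<Sum>r\<in>P c. a i r) ` ?C \<union> (\<lambda>c. \<Sum>r\<in>P c. a j r) ` ?C)"
      (is "_ > _ * ?B")
    using gap unfolding gap_condition_def by blast
  have ijV: "i \<in> {1..n}" "j \<in> {1..n}"
    using part lz i j unfolding is_partition_def by auto
  let ?x = "\<theta> 1"
  let ?S = "\<lambda>u. \<Sum>k\<in>{1..n}. a u k * sin (?x k - ?x u)"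
  have "circ_eq (?x k) (?x i) \<and> circ_eq (?x k) (?x j)" if "k \<in> P l \<union> P z" for k
    using that SP coincide lz i j unfolding in_SP_def clusters_coincide_def
    by (auto intro: circ_eq_sym)
  moreover have "(\<Sum>k\<in>P c. a i k) \<le> ?B \<and> (\<Sum>k\<in>P c. a j k) \<le> ?B" if "c \<in> ?C" for c
    using that by (auto intro: Max_ge)
  ultimately have bound_i: "\<bar>?S i\<bar> \<le> (real m - 2) * ?B" and bound_j: "\<bar>?S j\<bar> \<le> (real m - 2) * ?B"
    using coupling_bound_outside_two_clusters[OF graph part lz] ijV by auto
  have "kuramoto_field n a \<omega> ?x i = kuramoto_field n a \<omega> ?x j"
    using coincide i j by (intro kuramoto_locked_pair_field_eq[OF sol ijV])
      (auto simp: clusters_coincide_def)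
  then have "\<omega> i - \<omega> j = ?S j - ?S i"
    using ijV by (simp add: kuramoto_field_eq_full_sum)
  then have "\<bar>\<omega> i - \<omega> j\<bar> \<le> \<bar>?S j\<bar> + \<bar>?S i\<bar>"
    using abs_triangle_ineq4[of "?S j" "?S i"] by simp
  with gap_ij bound_i bound_j show False by linarith
qed

theorem mainTheorem9:
  fixes n m :: nat and a :: "nat \<Rightarrow> nat \<Rightarrow> real" and \<omega> :: "nat \<Rightarrow> real"
    and P :: "nat \<Rightarrow> nat set" and l z :: nat
  assumes graph: "weighted_graph n a"
    and conn: "graph_connected n a"
    and freq_pos: "\<forall>i\<in>{1..n}. \<omega> i > 0"
    and part: "is_partition n m P"
    and m_gt1: "m > 1"
    and A2: "assm_A2 m P \<omega>"
    and A3: "assm_A3 m P a"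
  shows
    "(l \<in> {1..m} \<and> z \<in> {1..m} \<and> l \<noteq> z \<and> gap_condition m P a \<omega> l z \<longrightarrow>
       \<not> (\<exists>\<theta>. kuramoto_solution n a \<omega> \<theta> \<and>
              (\<forall>t\<ge>0. in_SP m P (\<theta> t)) \<and>
              (\<forall>t\<ge>0. clusters_coincide P l z (\<theta> t))))
     \<and>
     ((\<forall>l'\<in>{1..m}. \<forall>z'\<in>{1..m}. l' \<noteq> z' \<longrightarrow> gap_condition m P a \<omega> l' z') \<longrightarrow>
       (\<forall>l'\<in>{1..m}. \<forall>z'\<in>{1..m}. l' \<noteq> z' \<longrightarrow>
          \<not> kuramoto_invariant n a \<omega> {th. in_SP m P th \<and> clusters_coincide P l' z' th}))"
proof (intro conjI impI ballI notI)
  assume "l \<in> {1..m} \<and> z \<in> {1..m} \<and> l \<noteq> z \<and> gap_condition m P a \<omega> l z"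
    and "\<exists>\<theta>. kuramoto_solution n a \<omega> \<theta> \<and> (\<forall>t\<ge>0. in_SP m P (\<theta> t)) \<and>
              (\<forall>t\<ge>0. clusters_coincide P l z (\<theta> t))"
  then show False using no_solution_with_coinciding_clusters[OF graph part] by blast
next
  fix l' z' assume "\<forall>l'\<in>{1..m}. \<forall>z'\<in>{1..m}. l' \<noteq> z' \<longrightarrow> gap_condition m P a \<omega> l' z'"
    and lz': "l' \<in> {1..m}" "z' \<in> {1..m}" "l' \<noteq> z'"
    and invariant: "kuramoto_invariant n a \<omega> {th. in_SP m P th \<and> clusters_coincide P l' z' th}"
  then have gap: "gap_condition m P a \<omega> l' z'" by blast
  have "(\<lambda>_. 0) \<in> {th. in_SP m P th \<and> clusters_coincide P l' z' th}"
    unfolding in_SP_def clusters_coincide_def circ_eq_def by auto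
  then obtain \<theta> where "kuramoto_solution n a \<omega> \<theta>"
      "\<forall>t\<ge>0. in_SP m P (\<theta> t) \<and> clusters_coincide P l' z' (\<theta> t)"
    using invariant unfolding kuramoto_invariant_def by blast
  then show False using no_solution_with_coinciding_clusters[OF graph part lz' gap] by blast
qed

end
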